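(* Let $N\ge1$ and let $F=(f_1,\ldots,f_N):\{0,1\}^N\to\{0,1\}^N$ be a synchronously updated linear Boolean network, where each $f_i(\mathbf x)=\sum_{j\in S_i}x_j \pmod 2$ for a subset $S_i\subseteq\{1,\dots,N\}$ of size $n_i$ (the in-degree of node $i$). For $1\le m\le N$, let $(\mathbf x,\mathbf y)$ be a uniformly random pair of states in $\{0,1\}^N$ with Hamming distance $d(\mathbf x,\mathbf y)=m$. Then $$D(F,m) := \mathbb{E}\Big[d\big(F(\mathbf x),F(\mathbf y)\big) \ \big| \ d(\mathbf x,\mathbf y) = m\Big] = \sum_{i=1}^N\mathbb{P}\left(f_i(\mathbf x) \neq f_i(\mathbf y) \ \big| \ d(\mathbf x,\mathbf y) =m \right) = \sum_{i=1}^N \sum_{\substack{1\le c\le m\\ c\text{ odd}}} H_{N,m,n_i}(c),$$ where $$H_{N,m,n_i}(c) = \frac{\binom mc \binom{N-m}{n_i-c}}{\binom N{n_i}} = \frac{\binom {n_i}c \binom{N-n_i}{m-c}}{\binom N{m}}$$ is the hypergeometric probability mass function.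
   Context: $d(\cdot,\cdot)$ denotes Hamming distance on $\{0,1\}^N$. Binomial coefficients $\binom ab$ are taken to be $0$ when $b<0$ or $b>a$. The quantity $D(F,m)$ is called the Derrida value of $F$ at $m$. *)

theory Defs
  imports "HOL-Probability.Probability"
begin

text \<open>Nodes are indexed by 0..<N (instead of 1..N). A state is a function
  nat => bool that is False outside {0..<N}.\<close>

definition states :: "nat \<Rightarrow> (nat \<Rightarrow> bool) set" where
  "states N = {0..<N} \<rightarrow>\<^sub>E (UNIV :: bool set)"

definition hamming :: "nat \<Rightarrow> (nat \<Rightarrow> bool) \<Rightarrow> (nat \<Rightarrow> bool) \<Rightarrow> nat" where
  "hamming N x y = card {i \<in> {0..<N}. x i \<noteq> y i}"

definition lin_node :: "nat set \<Rightarrow> (nat \<Rightarrow> bool) \<Rightarrow> bool" where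
  "lin_node T x = odd (card {j \<in> T. x j})"

definition lin_net :: "nat \<Rightarrow> (nat \<Rightarrow> nat set) \<Rightarrow> (nat \<Rightarrow> bool) \<Rightarrow> (nat \<Rightarrow> bool)" where
  "lin_net N S x = (\<lambda>i. if i < N then lin_node (S i) x else False)"

definition pairs_at :: "nat \<Rightarrow> nat \<Rightarrow> ((nat \<Rightarrow> bool) \<times> (nat \<Rightarrow> bool)) set" where
  "pairs_at N m = {(x, y). x \<in> states N \<and> y \<in> states N \<and> hamming N x y = m}"

definition derrida :: "nat \<Rightarrow> ((nat \<Rightarrow> bool) \<Rightarrow> (nat \<Rightarrow> bool)) \<Rightarrow> nat \<Rightarrow> real" where
  "derrida N F m = measure_pmf.expectation (pmf_of_set (pairs_at N m))
      (\<lambda>(x, y). real (hamming N (F x) (F y)))"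

text \<open>Hypergeometric pmf, with binomial coefficients treated as 0 for negative lower index.\<close>
definition hyper1 :: "nat \<Rightarrow> nat \<Rightarrow> nat \<Rightarrow> nat \<Rightarrow> real" where
  "hyper1 N m n c = (if c \<le> n then real (m choose c) * real ((N - m) choose (n - c)) / real (N choose n) else 0)"

definition hyper2 :: "nat \<Rightarrow> nat \<Rightarrow> nat \<Rightarrow> nat \<Rightarrow> real" where
  "hyper2 N m n c = (if c \<le> m then real (n choose c) * real ((N - n) choose (m - c)) / real (N choose m) else 0)"

end

theory Submission
  imports Defs
begin

text \<open>Since each node is a sum mod 2 of its inputs, node i takes different values on x and y
  exactly when the flip set D = {j. x j \<noteq> y j} meets S i in an odd number of points. For a
  uniformly random pair at distance m, the flip set is a uniformly random m-subset of the N nodes,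
  so the size of its intersection with S i is hypergeometrically distributed. Linearity of
  expectation turns the expected distance of the images into the sum over the nodes of the
  probabilities that they differ. The two forms of the hypergeometric pmf agree because both
  count the ways of choosing an m-set and an n-set together with c common points.\<close>

lemma choose_mult_diff_commute:
  "((M::nat) choose a) * ((M - a) choose b) = (M choose b) * ((M - b) choose a)"
proof (cases "a + b \<le> M")
  case True
  have "(M choose (a + b)) * ((a + b) choose a) = (M choose a) * ((M - a) choose b)"
    using choose_mult[of a "a + b" M] True by simp
  moreover have "(M choose (a + b)) * ((a + b) choose b) = (M choose b) * ((M - b) choose a)"
    using choose_mult[of b "a + b" M] True by simp
  ultimately show ?thesis
    using binomial_symmetric[of a "a + b"] by simp
next
  case False
  then show ?thesis
    by (cases "a \<le> M"; cases "b \<le> M") (auto simp: binomial_eq_0)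
qed

lemma choose_mult_hypergeometric_symmetric:
  assumes "c \<le> m" "c \<le> n" "m \<le> N" "n \<le> N"
  shows "(N choose m) * (m choose c) * ((N - m) choose (n - c))
       = (N choose n) * (n choose c) * ((N - n) choose (m - c))"
proof -
  have "(N choose m) * (m choose c) * ((N - m) choose (n - c))
      = (N choose c) * (((N - c) choose (m - c)) * ((N - c - (m - c)) choose (n - c)))"
    using choose_mult[of c m N] assms by (simp add: diff_diff_eq)
  also have "\<dots> = (N choose c) * (((N - c) choose (n - c)) * ((N - c - (n - c)) choose (m - c)))"
    by (simp only: choose_mult_diff_commute)
  also have "\<dots> = (N choose n) * (n choose c) * ((N - n) choose (m - c))"
    using choose_mult[of c n N] assms by (simp add: diff_diff_eq)
  finally show ?thesis .
qed

lemma hyper1_eq_hyper2: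
  assumes "c \<le> m" "m \<le> N" "n \<le> N"
  shows "hyper1 N m n c = hyper2 N m n c"
proof (cases "c \<le> n")
  case True
  have "real (m choose c) * real ((N - m) choose (n - c)) * real (N choose m)
      = real (n choose c) * real ((N - n) choose (m - c)) * real (N choose n)"
    using arg_cong[OF choose_mult_hypergeometric_symmetric[OF assms(1) True assms(2,3)], of real]
    by (simp only: of_nat_mult ac_simps)
  with True assms show ?thesis
    by (simp add: hyper1_def hyper2_def field_simps)
qed (use assms in \<open>simp add: hyper1_def hyper2_def\<close>)

lemma finite_states: "finite (states N)"
  by (simp add: states_def finite_PiE)

lemma card_states: "card (states N) = 2 ^ N"
  by (simp add: states_def card_PiE)

definition flip_set :: "nat \<Rightarrow> (nat \<Rightarrow> bool) \<Rightarrow> (nat \<Rightarrow> bool) \<Rightarrow> nat set" where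
  "flip_set N x y = {i \<in> {0..<N}. x i \<noteq> y i}"

lemma bij_betw_flip_set:
  assumes "x \<in> states N"
  shows "bij_betw (flip_set N x) (states N) (Pow {0..<N})"
proof (rule bij_betw_byWitness[where f' = "\<lambda>D. restrict (\<lambda>i. x i \<noteq> (i \<in> D)) {0..<N}"])
  show "\<forall>D\<in>Pow {0..<N}. flip_set N x (restrict (\<lambda>i. x i \<noteq> (i \<in> D)) {0..<N}) = D"
    by (auto simp: flip_set_def)
  show "flip_set N x ` states N \<subseteq> Pow {0..<N}"
    by (auto simp: flip_set_def)
  show "(\<lambda>D. restrict (\<lambda>i. x i \<noteq> (i \<in> D)) {0..<N}) ` Pow {0..<N} \<subseteq> states N"
    by (auto simp: states_def)
  show "\<forall>y\<in>states N. restrict (\<lambda>i. x i \<noteq> (i \<in> flip_set N x y)) {0..<N} = y"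
  proof
    fix y assume y: "y \<in> states N"
    have "restrict (\<lambda>i. x i \<noteq> (i \<in> flip_set N x y)) {0..<N} = restrict y {0..<N}"
      by (rule restrict_ext) (auto simp: flip_set_def)
    then show "restrict (\<lambda>i. x i \<noteq> (i \<in> flip_set N x y)) {0..<N} = y"
      using y by (simp add: states_def PiE_restrict)
  qed
qed

lemma card_state_pairs_by_flip_set:
  "card {(x, y). x \<in> states N \<and> y \<in> states N \<and> Q (flip_set N x y)}
     = 2 ^ N * card {D \<in> Pow {0..<N}. Q D}"
proof -
  have "card {(x, y). x \<in> states N \<and> y \<in> states N \<and> Q (flip_set N x y)}
      = card (Sigma (states N) (\<lambda>x. {y \<in> states N. Q (flip_set N x y)}))"
    by (rule arg_cong[where f = card]) auto
  also have "\<dots> = (\<Sum>x\<in>states N. card {y \<in> states N. Q (flip_set N x y)})"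
    by (rule card_SigmaI) (simp_all add: finite_states)
  also have "\<dots> = (\<Sum>x\<in>states N. card {D \<in> Pow {0..<N}. Q D})"
  proof (rule sum.cong[OF refl])
    fix x assume "x \<in> states N"
    show "card {y \<in> states N. Q (flip_set N x y)} = card {D \<in> Pow {0..<N}. Q D}"
      using bij_betw_Collect[OF bij_betw_flip_set[OF \<open>x \<in> states N\<close>]] by (rule bij_betw_same_card) simp
  qed
  finally show ?thesis
    by (simp add: card_states)
qed

lemma pairs_at_eq_flip_set:
  "pairs_at N m = {(x, y). x \<in> states N \<and> y \<in> states N \<and> card (flip_set N x y) = m}"
  by (auto simp: pairs_at_def hamming_def flip_set_def)

lemma card_pairs_at: "card (pairs_at N m) = 2 ^ N * (N choose m)"
proof -
  have "card (pairs_at N m) = 2 ^ N * card {D \<in> Pow {0..<N}. card D = m}"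
    unfolding pairs_at_eq_flip_set by (rule card_state_pairs_by_flip_set)
  then show ?thesis
    by (simp add: n_subsets)
qed

lemma finite_pairs_at: "finite (pairs_at N m)"
  by (rule finite_subset[of _ "states N \<times> states N"]) (auto simp: pairs_at_def finite_states)

lemma lin_node_differs_iff:
  assumes "finite T"
  shows "lin_node T x \<noteq> lin_node T y \<longleftrightarrow> odd (card {j \<in> T. x j \<noteq> y j})"
proof -
  define A where "A = {j \<in> T. x j}"
  define B where "B = {j \<in> T. y j}"
  have fin: "finite A" "finite B"
    using assms by (auto simp: A_def B_def)
  have "{j \<in> T. x j \<noteq> y j} = (A - B) \<union> (B - A)"
    by (auto simp: A_def B_def)
  moreover have "card ((A - B) \<union> (B - A)) = card (A - B) + card (B - A)"
    using fin by (intro card_Un_disjoint) auto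
  ultimately have "card {j \<in> T. x j \<noteq> y j} = card (A - B) + card (B - A)"
    by simp
  moreover have "card A = card (A - B) + card (A \<inter> B)" "card B = card (B - A) + card (A \<inter> B)"
    using card_Int_Diff[OF fin(1), of B] card_Int_Diff[OF fin(2), of A] by (simp_all add: Int_commute)
  ultimately show ?thesis
    by (simp add: lin_node_def flip: A_def B_def) blast
qed

lemma card_subsets_with_card_inter:
  assumes U: "finite U" and T: "T \<subseteq> U" and "c \<le> m"
  shows "card {D. D \<subseteq> U \<and> card D = m \<and> card (D \<inter> T) = c}
       = (card T choose c) * ((card U - card T) choose (m - c))"
proof -
  have fT: "finite T"
    using U T finite_subset by blast
  have "bij_betw (\<lambda>D. (D \<inter> T, D - T)) {D. D \<subseteq> U \<and> card D = m \<and> card (D \<inter> T) = c}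
          ({A. A \<subseteq> T \<and> card A = c} \<times> {B. B \<subseteq> U - T \<and> card B = m - c})"
  proof (rule bij_betw_byWitness[where f' = "\<lambda>(A, B). A \<union> B"])
    show "(\<lambda>D. (D \<inter> T, D - T)) ` {D. D \<subseteq> U \<and> card D = m \<and> card (D \<inter> T) = c}
        \<subseteq> {A. A \<subseteq> T \<and> card A = c} \<times> {B. B \<subseteq> U - T \<and> card B = m - c}"
    proof
      fix p assume "p \<in> (\<lambda>D. (D \<inter> T, D - T)) ` {D. D \<subseteq> U \<and> card D = m \<and> card (D \<inter> T) = c}"
      then obtain D where D: "D \<subseteq> U" "card D = m" "card (D \<inter> T) = c" and p: "p = (D \<inter> T, D - T)"
        by blast
      have "card D = card (D \<inter> T) + card (D - T)"
        using finite_subset[OF D(1) U] by (rule card_Int_Diff)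
      then show "p \<in> {A. A \<subseteq> T \<and> card A = c} \<times> {B. B \<subseteq> U - T \<and> card B = m - c}"
        using D p by auto
    qed
    show "(\<lambda>(A, B). A \<union> B) ` ({A. A \<subseteq> T \<and> card A = c} \<times> {B. B \<subseteq> U - T \<and> card B = m - c})
        \<subseteq> {D. D \<subseteq> U \<and> card D = m \<and> card (D \<inter> T) = c}"
    proof
      fix p assume "p \<in> (\<lambda>(A, B). A \<union> B) ` ({A. A \<subseteq> T \<and> card A = c} \<times> {B. B \<subseteq> U - T \<and> card B = m - c})"
      then obtain A B where A: "A \<subseteq> T" "card A = c" and B: "B \<subseteq> U - T" "card B = m - c"
        and p: "p = A \<union> B"
        by blast
      have "finite A" "finite B"
        using A B fT U finite_subset by blast+
      moreover have "(A \<union> B) \<inter> T = A" "A \<inter> B = {}"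
        using A B by auto
      ultimately show "p \<in> {D. D \<subseteq> U \<and> card D = m \<and> card (D \<inter> T) = c}"
        using A B T p \<open>c \<le> m\<close> by (auto simp: card_Un_disjoint)
    qed
  qed auto
  then have "card {D. D \<subseteq> U \<and> card D = m \<and> card (D \<inter> T) = c}
      = card {A. A \<subseteq> T \<and> card A = c} * card {B. B \<subseteq> U - T \<and> card B = m - c}"
    by (simp add: bij_betw_same_card card_cartesian_product)
  then show ?thesis
    using U fT T by (simp add: n_subsets card_Diff_subset)
qed

lemma lin_node_differs_iff_flip_set:
  assumes "T \<subseteq> {0..<N}"
  shows "lin_node T x \<noteq> lin_node T y \<longleftrightarrow> odd (card (flip_set N x y \<inter> T))"
proof -
  have "{j \<in> T. x j \<noteq> y j} = flip_set N x y \<inter> T"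
    using assms by (auto simp: flip_set_def)
  then show ?thesis
    using assms finite_subset lin_node_differs_iff by (metis finite_atLeastLessThan)
qed

lemma card_pairs_at_lin_node_differs:
  assumes T: "T \<subseteq> {0..<N}"
  shows "card (pairs_at N m \<inter> {(x, y). lin_node T x \<noteq> lin_node T y})
     = 2 ^ N * (\<Sum>c\<in>{c. 1 \<le> c \<and> c \<le> m \<and> odd c}. (card T choose c) * ((N - card T) choose (m - c)))"
proof -
  define flips where "flips c = {D. D \<subseteq> {0..<N} \<and> card D = m \<and> card (D \<inter> T) = c}" for c
  have "pairs_at N m \<inter> {(x, y). lin_node T x \<noteq> lin_node T y}
      = {(x, y). x \<in> states N \<and> y \<in> states N
           \<and> card (flip_set N x y) = m \<and> odd (card (flip_set N x y \<inter> T))}"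
    using lin_node_differs_iff_flip_set[OF T] unfolding pairs_at_eq_flip_set by blast
  then have "card (pairs_at N m \<inter> {(x, y). lin_node T x \<noteq> lin_node T y})
      = 2 ^ N * card {D \<in> Pow {0..<N}. card D = m \<and> odd (card (D \<inter> T))}"
    using card_state_pairs_by_flip_set[where Q = "\<lambda>D. card D = m \<and> odd (card (D \<inter> T))"] by simp
  also have "{D \<in> Pow {0..<N}. card D = m \<and> odd (card (D \<inter> T))}
      = (\<Union>c\<in>{c. 1 \<le> c \<and> c \<le> m \<and> odd c}. flips c)"
  proof -
    have "card (D \<inter> T) \<le> card D" if "D \<subseteq> {0..<N}" for D
      using that by (meson card_mono finite_atLeastLessThan finite_subset inf_le1)
    then show ?thesis
      by (auto simp: flips_def odd_pos Suc_leI)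
  qed
  also have "card (\<Union>c\<in>{c. 1 \<le> c \<and> c \<le> m \<and> odd c}. flips c)
      = (\<Sum>c\<in>{c. 1 \<le> c \<and> c \<le> m \<and> odd c}. (card T choose c) * ((N - card T) choose (m - c)))"
    by (subst card_UN_disjoint)
      (auto simp: flips_def card_subsets_with_card_inter[OF _ T] intro: sum.cong)
  finally show ?thesis .
qed

lemma derrida_eq_sum_prob_node_differs:
  "derrida N F m = (\<Sum>i<N. measure_pmf.prob (pmf_of_set (pairs_at N m)) {(x, y). F x i \<noteq> F y i})"
proof -
  have "(\<lambda>(x, y). real (hamming N (F x) (F y))) = (\<lambda>p. \<Sum>i<N. indicator {(x, y). F x i \<noteq> F y i} p)"
    by (auto simp: hamming_def indicator_def sum.If_cases atLeast0LessThan Int_def)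
  then show ?thesis
    unfolding derrida_def by (simp add: Bochner_Integration.integral_sum measure_pmf.emeasure_eq_measure)
qed

lemma prob_lin_node_differs:
  assumes "T \<subseteq> {0..<N}" "m \<le> N"
  shows "measure_pmf.prob (pmf_of_set (pairs_at N m)) {(x, y). lin_node T x \<noteq> lin_node T y}
       = (\<Sum>c\<in>{c. 1 \<le> c \<and> c \<le> m \<and> odd c}. hyper2 N m (card T) c)"
proof -
  have "pairs_at N m \<noteq> {}"
    using card_pairs_at[of N m] assms(2) by (auto simp del: card_eq_0_iff)
  then have "measure_pmf.prob (pmf_of_set (pairs_at N m)) {(x, y). lin_node T x \<noteq> lin_node T y}
      = real (card (pairs_at N m \<inter> {(x, y). lin_node T x \<noteq> lin_node T y})) / real (card (pairs_at N m))"
    by (rule measure_pmf_of_set[OF _ finite_pairs_at])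
  also have "\<dots> = (\<Sum>c\<in>{c. 1 \<le> c \<and> c \<le> m \<and> odd c}.
      real ((card T choose c) * ((N - card T) choose (m - c)))) / real (N choose m)"
    unfolding card_pairs_at_lin_node_differs[OF assms(1)] card_pairs_at by simp
  also have "\<dots> = (\<Sum>c\<in>{c. 1 \<le> c \<and> c \<le> m \<and> odd c}. hyper2 N m (card T) c)"
    by (simp add: sum_divide_distrib hyper2_def)
  finally show ?thesis .
qed

theorem mainTheorem2:
  fixes N m :: nat and S :: "nat \<Rightarrow> nat set"
  assumes "N \<ge> 1"
    and "\<forall>i<N. S i \<subseteq> {0..<N}"
    and "1 \<le> m" and "m \<le> N"
  shows "derrida N (lin_net N S) m
           = (\<Sum>i<N. measure_pmf.prob (pmf_of_set (pairs_at N m))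
                        {(x, y). lin_node (S i) x \<noteq> lin_node (S i) y})
       \<and> (\<Sum>i<N. measure_pmf.prob (pmf_of_set (pairs_at N m))
                        {(x, y). lin_node (S i) x \<noteq> lin_node (S i) y})
           = (\<Sum>i<N. \<Sum>c\<in>{c. 1 \<le> c \<and> c \<le> m \<and> odd c}. hyper1 N m (card (S i)) c)
       \<and> (\<forall>i<N. \<forall>c\<le>m. hyper1 N m (card (S i)) c = hyper2 N m (card (S i)) c)"
proof (intro conjI)
  have S: "S i \<subseteq> {0..<N}" "card (S i) \<le> N" if "i < N" for i
    using assms(2) that card_mono[of "{0..<N}" "S i"] by auto
  show hyper: "\<forall>i<N. \<forall>c\<le>m. hyper1 N m (card (S i)) c = hyper2 N m (card (S i)) c"
    using S(2) assms(4) by (auto intro: hyper1_eq_hyper2)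
  show "derrida N (lin_net N S) m
      = (\<Sum>i<N. measure_pmf.prob (pmf_of_set (pairs_at N m))
           {(x, y). lin_node (S i) x \<noteq> lin_node (S i) y})"
    unfolding derrida_eq_sum_prob_node_differs by (simp add: lin_net_def)
  show "(\<Sum>i<N. measure_pmf.prob (pmf_of_set (pairs_at N m))
          {(x, y). lin_node (S i) x \<noteq> lin_node (S i) y})
      = (\<Sum>i<N. \<Sum>c\<in>{c. 1 \<le> c \<and> c \<le> m \<and> odd c}. hyper1 N m (card (S i)) c)"
  proof (rule sum.cong[OF refl])
    fix i assume "i \<in> {..<N}"
    then have "i < N"
      by simp
    then show "measure_pmf.prob (pmf_of_set (pairs_at N m)) {(x, y). lin_node (S i) x \<noteq> lin_node (S i) y}
        = (\<Sum>c\<in>{c. 1 \<le> c \<and> c \<le> m \<and> odd c}. hyper1 N m (card (S i)) c)"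
      using hyper prob_lin_node_differs[OF S(1)[OF \<open>i < N\<close>] assms(4)] by simp
  qed
qed

end
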